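(* Let $G=\{G_t,t\geq 0\}$ be a centered Gaussian process such that $G_0=0$ and there exist constants $c>0$ and $\gamma\in(0,1)$ with $E[(G_t-G_s)^2]\leq c|t-s|^{2\gamma}$ for all $s,t\geq 0$. Let $\theta>0$, $\mu\in\mathbb{R}$, and let $X$ be the solution of $X_0=0$, $dX_t=\theta(\mu+X_t)dt+dG_t$, $t\geq0$. Then for any $\delta$ with $\gamma<\delta\leq 1$, almost surely, as $T\to\infty$, $$\frac{G_T}{T^{\delta}}\longrightarrow 0,\qquad \frac{e^{-\theta T}}{T}\int_0^T|G_tX_t|\,dt\longrightarrow 0.$$
   Context: $G$ is taken in a modification with locally $(\gamma-\varepsilon)$-Hölder continuous paths for every $\varepsilon\in(0,\gamma)$ (which exists by Kolmogorov–Centsov). The process $X$ is the unique pathwise solution of the equation, i.e. $X_t=\mu\theta t+\theta\int_0^t X_s\,ds+G_t$; explicitly $X_t=\mu(e^{\theta t}-1)+e^{\theta t}\int_0^t e^{-\theta s}dG_s$, where the integral is a Young integral. *)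

theory Defs
  imports "HOL-Probability.Probability"
begin

definition gaussian_rv :: "'a measure \<Rightarrow> ('a \<Rightarrow> real) \<Rightarrow> bool" where
  "gaussian_rv M Y \<longleftrightarrow>
     (\<exists>m \<sigma>. \<sigma> > 0 \<and> distributed M lborel Y (normal_density m \<sigma>))
   \<or> (Y \<in> borel_measurable M \<and> (\<exists>c. AE x in M. Y x = c))"

text \<open>A process indexed by times t \<ge> 0 is Gaussian if all its finite-dimensional
  distributions are jointly Gaussian, i.e. every finite linear combination of its
  values is a Gaussian random variable.\<close>
definition gaussian_process :: "'a measure \<Rightarrow> (real \<Rightarrow> 'a \<Rightarrow> real) \<Rightarrow> bool" where
  "gaussian_process M G \<longleftrightarrow>
     (\<forall>t\<ge>0. G t \<in> borel_measurable M) \<and>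
     (\<forall>S a. finite S \<longrightarrow> S \<subseteq> {0..} \<longrightarrow> gaussian_rv M (\<lambda>x. \<Sum>t\<in>S. a t * G t x))"

definition locally_holder_nonneg :: "real \<Rightarrow> (real \<Rightarrow> real) \<Rightarrow> bool" where
  "locally_holder_nonneg \<alpha> f \<longleftrightarrow>
     (\<forall>K\<ge>0. \<exists>C. \<forall>s\<in>{0..K}. \<forall>t\<in>{0..K}. \<bar>f t - f s\<bar> \<le> C * \<bar>t - s\<bar> powr \<alpha>)"

end

theory Submission
  imports Defs "HOL-Real_Asymp.Real_Asymp"
begin

(* An increment of a Gaussian process is Gaussian, so its even moments are controlled by its
   second moment: P(|G t - G s| >= a) <= C_k |t - s|^(2 gamma k) / a^(2k) for every k.  Chaining
   over the dyadic points of [n, n+1] and Borel-Cantelli over n then show that almost surely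
   |G t| <= 2 (t + 1)^d for large t, for any d > gamma; taking gamma < d < delta gives the
   first limit.  For the second, Y t = integral of X over [0, t] solves Y' = theta Y + F with
   |F t| = |mu theta t + G t| = O(t), so exp(-theta t) Y t stays bounded, |X t| = O(exp(theta t)),
   and the integral of |G X| over [0, T] is O(T^d exp(theta T)) with d < 1. *)

section \<open>Even moments of Gaussian variables\<close>

lemma power_add_even_le:
  fixes a b :: real
  shows "(a + b) ^ (2*k) \<le> 4^k * (a^(2*k) + b^(2*k))"
proof -
  have even_abs: "\<bar>x\<bar>^(2*k) = x^(2*k)" for x :: real
    by (simp add: power_mult)
  define m where "m = max \<bar>a\<bar> \<bar>b\<bar>"
  have "\<bar>a + b\<bar> ^ (2*k) \<le> (2*m)^(2*k)"
    unfolding m_def by (intro power_mono) auto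
  also have "\<dots> = 4^k * m^(2*k)"
    by (simp add: power_mult power_mult_distrib)
  also have "m^(2*k) \<le> \<bar>a\<bar>^(2*k) + \<bar>b\<bar>^(2*k)"
    unfolding m_def by (cases "\<bar>a\<bar> \<le> \<bar>b\<bar>") (auto simp: max_def)
  finally show ?thesis
    by (simp add: even_abs)
qed

lemma (in prob_space) normal_moments:
  assumes "0 < \<sigma>" and D: "distributed M lborel Y (normal_density m \<sigma>)"
  shows "integrable M (\<lambda>x. (Y x - m)^j)"
    and "expectation (\<lambda>x. (Y x - m)^(2*k)) \<le> fact (2*k) * \<sigma>^(2*k)"
    and "expectation (\<lambda>x. (Y x)\<^sup>2) = \<sigma>\<^sup>2 + m\<^sup>2"
proof -
  have [measurable]: "Y \<in> borel_measurable M"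
    using D by (auto dest: distributed_measurable)
  show central_integrable: "integrable M (\<lambda>x. (Y x - m)^j)" for j
    using integrable_normal_moment[OF \<open>0 < \<sigma>\<close>, of m j] distributed_integrable[OF D, of "\<lambda>x. (x - m)^j"]
    by simp
  have central_moment: "expectation (\<lambda>x. (Y x - m)^j) = (\<integral>x. normal_density m \<sigma> x * (x - m)^j \<partial>lborel)" for j
    using distributed_integral[OF D, of "\<lambda>x. (x - m)^j"] by simp
  have "expectation (\<lambda>x. (Y x - m)^(2*k)) = fact (2*k) * \<sigma>^(2*k) / (2^k * fact k)"
    using central_moment[of "2*k"] integral_normal_moment_even[OF \<open>0 < \<sigma>\<close>, of m k] \<open>0 < \<sigma>\<close>
    by (simp add: field_simps flip: power_mult)
  also have "\<dots> \<le> fact (2*k) * \<sigma>^(2*k) / 1"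
    using fact_ge_1[of k, where 'a=real] \<open>0 < \<sigma>\<close>
    by (intro divide_left_mono) (auto intro: mult_ge1_I one_le_power)
  finally show "expectation (\<lambda>x. (Y x - m)^(2*k)) \<le> fact (2*k) * \<sigma>^(2*k)"
    by simp
  have "expectation (\<lambda>x. Y x - m) = 0" "expectation (\<lambda>x. (Y x - m)\<^sup>2) = \<sigma>\<^sup>2"
    using central_moment[of 1] central_moment[of 2] integral_normal_moment_odd[OF \<open>0 < \<sigma>\<close>, of m 0]
      integral_normal_moment_even[OF \<open>0 < \<sigma>\<close>, of m 1]
    by (simp_all add: power2_eq_square)
  moreover have "(Y x)\<^sup>2 = (Y x - m)\<^sup>2 + 2 * m * (Y x - m) + m\<^sup>2" for x
    by (simp add: power2_eq_square algebra_simps)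
  ultimately show "expectation (\<lambda>x. (Y x)\<^sup>2) = \<sigma>\<^sup>2 + m\<^sup>2"
    using central_integrable[of 2] central_integrable[of 1] by (simp add: prob_space)
qed

lemma (in prob_space) normal_even_moment_le:
  assumes "0 < \<sigma>" and D: "distributed M lborel Y (normal_density m \<sigma>)"
  shows "integrable M (\<lambda>x. Y x ^ (2*k))"
    and "expectation (\<lambda>x. Y x ^ (2*k)) \<le> 2 * 4^k * fact (2*k) * expectation (\<lambda>x. (Y x)\<^sup>2) ^ k"
proof -
  have [measurable]: "Y \<in> borel_measurable M"
    using D by (auto dest: distributed_measurable)
  let ?S = "(\<sigma>\<^sup>2 + m\<^sup>2)^k"
  let ?bound = "\<lambda>x. 4^k * ((Y x - m)^(2*k) + m^(2*k))"
  have dominated: "\<bar>Y x ^ (2*k)\<bar> \<le> ?bound x" for x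
    using power_add_even_le[of "Y x - m" m k] by (simp add: power_mult)
  have bound_integrable: "integrable M ?bound"
    using normal_moments(1)[OF assms, of "2*k"] by simp
  show power_integrable: "integrable M (\<lambda>x. Y x ^ (2*k))"
  proof (rule Bochner_Integration.integrable_bound[OF bound_integrable])
    show "AE x in M. norm (Y x ^ (2*k)) \<le> norm (?bound x)"
      using dominated by (auto intro: order_trans[OF _ abs_ge_self])
  qed measurable
  have "\<sigma>^(2*k) \<le> ?S" "m^(2*k) \<le> ?S"
    unfolding power_mult by (auto intro: power_mono)
  moreover have "?S \<le> fact (2*k) * ?S"
    using mult_right_mono[OF fact_ge_1, of ?S "2*k"] by simp
  ultimately have "expectation (\<lambda>x. (Y x - m)^(2*k)) \<le> fact (2*k) * ?S" "m^(2*k) \<le> fact (2*k) * ?S"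
    using normal_moments(2)[OF assms, of k] by (auto intro: order_trans mult_left_mono)
  then have "4^k * (expectation (\<lambda>x. (Y x - m)^(2*k)) + m^(2*k)) \<le> 4^k * (fact (2*k) * ?S + fact (2*k) * ?S)"
    by (intro mult_left_mono add_mono) auto
  have "expectation (\<lambda>x. Y x ^ (2*k)) \<le> expectation ?bound"
    using dominated by (intro integral_mono[OF power_integrable bound_integrable]) (simp add: abs_le_iff)
  also have "\<dots> = 4^k * (expectation (\<lambda>x. (Y x - m)^(2*k)) + m^(2*k))"
    using normal_moments(1)[OF assms, of "2*k"] by (simp add: prob_space)
  also note \<open>\<dots> \<le> 4^k * (fact (2*k) * ?S + fact (2*k) * ?S)\<close>
  finally show "expectation (\<lambda>x. Y x ^ (2*k)) \<le> 2 * 4^k * fact (2*k) * expectation (\<lambda>x. (Y x)\<^sup>2) ^ k"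
    by (simp add: normal_moments(3)[OF assms])
qed

lemma (in prob_space) gaussian_rv_even_moment_le:
  assumes "gaussian_rv M Y"
  shows "integrable M (\<lambda>x. Y x ^ (2*k))"
    and "expectation (\<lambda>x. Y x ^ (2*k)) \<le> 2 * 4^k * fact (2*k) * expectation (\<lambda>x. (Y x)\<^sup>2) ^ k"
proof -
  have "integrable M (\<lambda>x. Y x ^ (2*k)) \<and>
    expectation (\<lambda>x. Y x ^ (2*k)) \<le> 2 * 4^k * fact (2*k) * expectation (\<lambda>x. (Y x)\<^sup>2) ^ k"
  proof (cases "\<exists>m \<sigma>. \<sigma> > 0 \<and> distributed M lborel Y (normal_density m \<sigma>)")
    case True
    then show ?thesis
      using normal_even_moment_le by blast
  next
    case False
    then obtain c where [measurable]: "Y \<in> borel_measurable M" and c: "AE x in M. Y x = c"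
      using assms unfolding gaussian_rv_def by auto
    have power_ae: "AE x in M. Y x ^ (2*k) = (c\<^sup>2)^k" and square_ae: "AE x in M. (Y x)\<^sup>2 = c\<^sup>2"
      using c by (auto simp: power_mult)
    have "integrable M (\<lambda>x. Y x ^ (2*k))"
      using integrable_cong_AE[OF _ _ power_ae] by simp
    moreover have "expectation (\<lambda>x. Y x ^ (2*k)) = (c\<^sup>2)^k" "expectation (\<lambda>x. (Y x)\<^sup>2) = c\<^sup>2"
      using integral_cong_AE[OF _ _ power_ae] integral_cong_AE[OF _ _ square_ae] by (simp_all add: prob_space)
    moreover have "(c\<^sup>2)^k \<le> 2 * 4^k * fact (2*k) * (c\<^sup>2)^k"
      using mult_right_mono[of 1 "2 * 4^k * fact (2*k)" "(c\<^sup>2)^k"] by (simp add: mult_ge1_I)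
    ultimately show ?thesis
      by simp
  qed
  then show "integrable M (\<lambda>x. Y x ^ (2*k))"
    and "expectation (\<lambda>x. Y x ^ (2*k)) \<le> 2 * 4^k * fact (2*k) * expectation (\<lambda>x. (Y x)\<^sup>2) ^ k"
    by auto
qed

lemma (in finite_measure) measure_abs_ge_le_even_moment:
  assumes [measurable]: "f \<in> borel_measurable M"
    and "integrable M (\<lambda>x. f x ^ (2*k))" and "0 < a"
  shows "measure M {x\<in>space M. a \<le> \<bar>f x\<bar>} \<le> (\<integral>x. f x ^ (2*k) \<partial>M) / a ^ (2*k)"
proof -
  have "{x\<in>space M. a \<le> \<bar>f x\<bar>} \<subseteq> {x\<in>space M. a ^ (2*k) \<le> f x ^ (2*k)}"
  proof safe
    fix x assume "a \<le> \<bar>f x\<bar>"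
    then have "a ^ (2*k) \<le> \<bar>f x\<bar> ^ (2*k)"
      using \<open>0 < a\<close> by (intro power_mono) auto
    then show "a ^ (2*k) \<le> f x ^ (2*k)"
      by (simp add: power_mult)
  qed
  then have "measure M {x\<in>space M. a \<le> \<bar>f x\<bar>} \<le> measure M {x\<in>space M. a ^ (2*k) \<le> f x ^ (2*k)}"
    by (intro finite_measure_mono) measurable
  also have "\<dots> \<le> (\<integral>x. f x ^ (2*k) \<partial>M) / a ^ (2*k)"
    using assms by (intro integral_Markov_inequality_measure) (auto simp: power_mult)
  finally show ?thesis .
qed

lemma gaussian_rv_diff:
  assumes "gaussian_process M G" and "0 \<le> s" and "0 \<le> t"
  shows "gaussian_rv M (\<lambda>x. G t x - G s x)"
proof (cases "s = t")
  case True
  show ?thesis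
    unfolding gaussian_rv_def True by (intro disjI2) auto
next
  case False
  have "\<forall>S a. finite S \<longrightarrow> S \<subseteq> {0..} \<longrightarrow> gaussian_rv M (\<lambda>x. \<Sum>u\<in>S. a u * G u x)"
    using assms(1) unfolding gaussian_process_def by blast
  then have "gaussian_rv M (\<lambda>x. \<Sum>u\<in>{s, t}. (if u = t then 1 else -1) * G u x)"
    using assms(2,3) by simp
  then show ?thesis
    using False by simp
qed

lemma (in prob_space) gaussian_process_increment_tail:
  assumes "gaussian_process M G"
    and incr: "\<forall>s\<ge>0. \<forall>t\<ge>0. expectation (\<lambda>x. (G t x - G s x)\<^sup>2) \<le> c * \<bar>t - s\<bar> powr (2 * \<gamma>)"
    and "0 \<le> s" "0 \<le> t" "0 < a" "0 < k"
  shows "prob {x\<in>space M. a \<le> \<bar>G t x - G s x\<bar>}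
    \<le> 2 * 4^k * fact (2*k) * c^k * \<bar>t - s\<bar> powr (2 * \<gamma> * k) / a powr (2 * k)"
proof -
  let ?Y = "\<lambda>x. G t x - G s x"
  have gaussian: "gaussian_rv M ?Y"
    using gaussian_rv_diff assms by blast
  have [measurable]: "G s \<in> borel_measurable M" "G t \<in> borel_measurable M"
    using assms(1,3,4) unfolding gaussian_process_def by auto
  have "prob {x\<in>space M. a \<le> \<bar>?Y x\<bar>} \<le> expectation (\<lambda>x. ?Y x ^ (2*k)) / a ^ (2*k)"
    by (intro measure_abs_ge_le_even_moment gaussian_rv_even_moment_le(1)[OF gaussian] \<open>0 < a\<close>)
      measurable
  also have "\<dots> \<le> 2 * 4^k * fact (2*k) * expectation (\<lambda>x. (?Y x)\<^sup>2) ^ k / a ^ (2*k)"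
    using gaussian_rv_even_moment_le(2)[OF gaussian] \<open>0 < a\<close> by (intro divide_right_mono) auto
  also have "expectation (\<lambda>x. (?Y x)\<^sup>2) ^ k \<le> (c * \<bar>t - s\<bar> powr (2 * \<gamma>)) ^ k"
    using incr \<open>0 \<le> s\<close> \<open>0 \<le> t\<close> by (intro power_mono) auto
  also have "(c * \<bar>t - s\<bar> powr (2 * \<gamma>)) ^ k = c^k * \<bar>t - s\<bar> powr (2 * \<gamma> * k)"
    using \<open>0 < k\<close> by (cases "t = s") (auto simp: power_mult_distrib powr_power mult.commute)
  also have "a ^ (2*k) = a powr (2 * k)"
    using \<open>0 < a\<close> powr_realpow[of a "2*k"] by simp
  finally show ?thesis
    by (simp add: mult.assoc divide_right_mono)
qed

section \<open>Dyadic chaining\<close>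

lemma dyadic_chain_bound:
  fixes g :: "real \<Rightarrow> real" and a :: "nat \<Rightarrow> real"
  assumes step: "\<And>l i. i < 2^l \<Longrightarrow> \<bar>g (s + real (i+1) / 2^l) - g (s + real i / 2^l)\<bar> \<le> a l"
  shows "j \<le> 2^m \<Longrightarrow> \<bar>g (s + real j / 2^m) - g s\<bar> \<le> (\<Sum>l\<le>m. a l)"
proof (induction m arbitrary: j)
  case 0
  have "\<bar>g (s + 1) - g s\<bar> \<le> a 0"
    using step[of 0 0] by simp
  with 0 show ?case
    by (cases j) auto
next
  case (Suc m)
  define j' where "j' = j div 2"
  have "\<bar>g (s + real j / 2^Suc m) - g (s + real j' / 2^m)\<bar> \<le> a (Suc m)"
  proof (cases "even j")
    case True
    then obtain b where "j = 2 * b"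
      by (elim evenE)
    moreover have "0 \<le> a (Suc m)"
      using order_trans[OF abs_ge_zero step[of 0 "Suc m"]] by simp
    ultimately show ?thesis
      by (simp add: j'_def)
  next
    case False
    then obtain b where "j = 2 * b + 1"
      by (elim oddE)
    moreover from this have "j' = b"
      unfolding j'_def by simp
    ultimately have "j = 2 * j' + 1" "2 * j' < 2^Suc m"
      using Suc.prems by auto
    then show ?thesis
      using step[of "2 * j'" "Suc m"] by simp
  qed
  moreover have "\<bar>g (s + real j' / 2^m) - g s\<bar> \<le> (\<Sum>l\<le>m. a l)"
    using Suc.prems by (intro Suc.IH) (auto simp: j'_def)
  ultimately show ?case
    by simp
qed

lemma continuous_dyadic_chain_bound:
  fixes g :: "real \<Rightarrow> real" and a :: "nat \<Rightarrow> real"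
  assumes step: "\<And>l i. i < 2^l \<Longrightarrow> \<bar>g (s + real (i+1) / 2^l) - g (s + real i / 2^l)\<bar> \<le> a l"
    and partial_sums: "\<And>m. (\<Sum>l\<le>m. a l) \<le> b"
    and "continuous_on {s..s+1} g" and "t \<in> {s..s+1}"
  shows "\<bar>g t - g s\<bar> \<le> b"
proof -
  define j where "j m = nat \<lfloor>(t - s) * 2^m\<rfloor>" for m :: nat
  define u where "u m = s + real (j m) / 2^m" for m :: nat
  have j_le: "j m \<le> 2^m" for m
  proof -
    have "(t - s) * 2^m \<le> 2^m"
      using \<open>t \<in> {s..s+1}\<close> by (auto intro: mult_left_le_one_le)
    then have "\<lfloor>(t - s) * 2^m\<rfloor> \<le> \<lfloor>(2::real)^m\<rfloor>"
      by (rule floor_mono)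
    then show ?thesis
      unfolding j_def by (simp add: nat_le_iff)
  qed
  have u_close: "\<bar>u m - t\<bar> \<le> 1 / 2^m" for m
  proof -
    let ?x = "(t - s) * 2^m"
    have "real (j m) = of_int \<lfloor>?x\<rfloor>"
      unfolding j_def using \<open>t \<in> {s..s+1}\<close> by simp
    then have "u m - t = (of_int \<lfloor>?x\<rfloor> - ?x) / 2^m"
      unfolding u_def by (simp add: field_simps)
    moreover have "\<bar>of_int \<lfloor>?x\<rfloor> - ?x\<bar> \<le> 1"
      by linarith
    ultimately show ?thesis
      by (simp add: divide_right_mono)
  qed
  have "(\<lambda>m. u m - t) \<longlonglongrightarrow> 0"
    by (rule Lim_null_comparison[where g="\<lambda>m. 1 / 2^m"])
      (use u_close in \<open>auto simp: LIMSEQ_divide_realpow_zero\<close>)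
  then have "u \<longlonglongrightarrow> t"
    by (simp add: LIM_zero_iff)
  moreover have "u m \<in> {s..s+1}" for m
    using j_le[of m] unfolding u_def by (simp add: divide_le_eq_1 flip: of_nat_le_iff)
  ultimately have "(\<lambda>m. \<bar>g (u m) - g s\<bar>) \<longlonglongrightarrow> \<bar>g t - g s\<bar>"
    using assms(3,4) by (intro tendsto_intros) (auto simp: continuous_on_sequentially comp_def)
  moreover have "\<bar>g (u m) - g s\<bar> \<le> b" for m
    unfolding u_def using dyadic_chain_bound[OF step j_le[of m]] partial_sums[of m] by simp
  ultimately show ?thesis
    by (intro LIMSEQ_le_const2) auto
qed

lemma geometric_partial_sum_le:
  fixes b \<rho> :: real
  assumes "0 \<le> b" "0 < \<rho>" "\<rho> < 1"
  shows "(\<Sum>l\<le>m. b * (1 - \<rho>) * \<rho>^l) \<le> b"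
proof -
  have "(\<Sum>l\<le>m. b * (1 - \<rho>) * \<rho>^l) = b * ((1 - \<rho>) * (\<Sum>l<Suc m. \<rho>^l))"
    by (simp add: lessThan_Suc_atMost sum_distrib_left mult.assoc)
  also have "\<dots> = b * (1 - \<rho>^Suc m)"
    by (simp only: one_diff_power_eq)
  also have "\<dots> \<le> b"
    using assms by (simp add: mult_left_le)
  finally show ?thesis .
qed

lemma abs_le_of_dyadic_increments:
  fixes g :: "real \<Rightarrow> real"
  assumes "continuous_on {s..s+1} g" and "\<bar>g s\<bar> \<le> b" and "0 < \<rho>" "\<rho> < 1"
    and step: "\<And>l i. i < 2^l \<Longrightarrow> \<bar>g (s + real (i+1) / 2^l) - g (s + real i / 2^l)\<bar> \<le> b * (1 - \<rho>) * \<rho>^l"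
    and "t \<in> {s..s+1}"
  shows "\<bar>g t\<bar> \<le> 2 * b"
proof -
  have "\<bar>g t - g s\<bar> \<le> b"
    using assms(2-4)
    by (intro continuous_dyadic_chain_bound[OF step _ assms(1,6)] geometric_partial_sum_le) auto
  then show ?thesis
    using assms(2) by linarith
qed

section \<open>Almost sure growth of the process\<close>

lemma realpow_powr:
  fixes x :: real
  assumes "0 < x"
  shows "(x ^ n) powr y = (x powr y) ^ n"
  using assms by (simp add: powr_realpow[symmetric] powr_powr mult.commute)

definition large_dyadic_increments :: "'a measure \<Rightarrow> (real \<Rightarrow> 'a \<Rightarrow> real) \<Rightarrow> real \<Rightarrow> (nat \<Rightarrow> real) \<Rightarrow> 'a set"
  where "large_dyadic_increments M G s a =
    (\<Union>l. \<Union>i\<in>{..<2^l}. {x\<in>space M. a l \<le> \<bar>G (s + real (i+1) / 2^l) x - G (s + real i / 2^l) x\<bar>})"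

lemma (in prob_space) large_dyadic_increments_bound:
  fixes G :: "real \<Rightarrow> 'a \<Rightarrow> real" and A r q b \<rho> s :: real
  defines "\<beta> \<equiv> 2 powr (1 - r) / \<rho> powr q"
  assumes meas: "\<And>t. 0 \<le> t \<Longrightarrow> G t \<in> borel_measurable M"
    and tail: "\<And>s t a. 0 \<le> s \<Longrightarrow> 0 \<le> t \<Longrightarrow> 0 < a \<Longrightarrow>
      prob {x\<in>space M. a \<le> \<bar>G t x - G s x\<bar>} \<le> A * \<bar>t - s\<bar> powr r / a powr q"
    and "0 \<le> A" "0 \<le> s" "0 < b" "0 < \<rho>" "\<rho> < 1" "\<beta> < 1"
  shows "large_dyadic_increments M G s (\<lambda>l. b * (1 - \<rho>) * \<rho>^l) \<in> events"
    and "prob (large_dyadic_increments M G s (\<lambda>l. b * (1 - \<rho>) * \<rho>^l))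
      \<le> A / ((b * (1 - \<rho>)) powr q * (1 - \<beta>))"
proof -
  define E where "E l i = {x\<in>space M. b * (1 - \<rho>) * \<rho>^l \<le>
    \<bar>G (s + real (i+1) / 2^l) x - G (s + real i / 2^l) x\<bar>}" for l i :: nat
  define F where "F l = (\<Union>i\<in>{..<2^l}. E l i)" for l
  define K where "K = A / (b * (1 - \<rho>)) powr q"
  have large_eq: "large_dyadic_increments M G s (\<lambda>l. b * (1 - \<rho>) * \<rho>^l) = (\<Union>l. F l)"
    unfolding large_dyadic_increments_def F_def E_def ..
  have E_sets: "E l i \<in> events" for l i
  proof -
    have [measurable]: "G (s + real (i+1) / 2^l) \<in> borel_measurable M" "G (s + real i / 2^l) \<in> borel_measurable M"
      using meas \<open>0 \<le> s\<close> by simp_all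
    show ?thesis
      unfolding E_def by measurable
  qed
  then have F_sets: "F l \<in> events" for l
    unfolding F_def by auto
  have "0 \<le> \<beta>"
    unfolding \<beta>_def by simp
  have E_bound: "prob (E l i) \<le> K * (2 powr (- r) / \<rho> powr q) ^ l" for l i
  proof -
    have "prob (E l i) \<le> A * (1 / 2^l) powr r / (b * (1 - \<rho>) * \<rho>^l) powr q"
      unfolding E_def using tail[of "s + real i / 2^l" "s + real (i+1) / 2^l"] \<open>0 \<le> s\<close> \<open>0 < b\<close> \<open>0 < \<rho>\<close> \<open>\<rho> < 1\<close>
      by (simp add: add_divide_distrib)
    also have "(1 / 2^l) powr r = (2 powr (- r)) ^ l"
      by (simp add: power_one_over[symmetric] realpow_powr powr_minus_divide powr_divide del: power_one_over)
    also have "(b * (1 - \<rho>) * \<rho>^l) powr q = (b * (1 - \<rho>)) powr q * (\<rho> powr q) ^ l"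
      using \<open>0 < b\<close> \<open>0 < \<rho>\<close> \<open>\<rho> < 1\<close> by (simp add: powr_mult realpow_powr)
    also have "A * (2 powr (- r)) ^ l / ((b * (1 - \<rho>)) powr q * (\<rho> powr q) ^ l)
        = K * (2 powr (- r) / \<rho> powr q) ^ l"
      by (simp add: K_def power_divide)
    finally show ?thesis .
  qed
  have F_bound: "prob (F l) \<le> K * \<beta>^l" for l
  proof -
    have "prob (F l) \<le> (\<Sum>i<2^l. prob (E l i))"
      unfolding F_def using E_sets by (intro measure_UNION_le) auto
    also have "\<dots> \<le> (\<Sum>i<(2::nat)^l. K * (2 powr (- r) / \<rho> powr q) ^ l)"
      by (intro sum_mono E_bound)
    also have "\<dots> = K * \<beta>^l"
      unfolding \<beta>_def by (simp add: powr_diff power_mult_distrib power_divide powr_minus field_simps)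
    finally show ?thesis .
  qed
  have geometric: "summable (\<lambda>l. K * \<beta>^l)"
    using \<open>0 \<le> \<beta>\<close> \<open>\<beta> < 1\<close> by (intro summable_mult summable_geometric) simp
  have summable_F: "summable (\<lambda>l. prob (F l))"
    using F_bound by (intro summable_comparison_test'[OF geometric]) auto
  have "prob (\<Union>l. F l) \<le> (\<Sum>l. prob (F l))"
    using F_sets summable_F by (intro finite_measure_subadditive_countably) auto
  also have "\<dots> \<le> (\<Sum>l. K * \<beta>^l)"
    using F_bound summable_F geometric by (intro suminf_le) auto
  also have "\<dots> = K / (1 - \<beta>)"
    using \<open>0 \<le> \<beta>\<close> \<open>\<beta> < 1\<close> by (simp add: suminf_mult suminf_geometric divide_inverse)
  finally show "prob (large_dyadic_increments M G s (\<lambda>l. b * (1 - \<rho>) * \<rho>^l))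
      \<le> A / ((b * (1 - \<rho>)) powr q * (1 - \<beta>))"
    unfolding large_eq K_def by simp
  show "large_dyadic_increments M G s (\<lambda>l. b * (1 - \<rho>) * \<rho>^l) \<in> events"
    unfolding large_eq using F_sets by auto
qed

lemma summable_real_Suc_powr:
  fixes e :: real
  assumes "e < -1"
  shows "summable (\<lambda>n. (real n + 1) powr e)"
proof -
  have "summable (\<lambda>n. real (Suc n) powr e)"
    using assms by (subst summable_Suc_iff) (simp add: summable_real_powr_iff)
  moreover have "(\<lambda>n. real (Suc n) powr e) = (\<lambda>n. (real n + 1) powr e)"
    by (simp add: add.commute)
  ultimately show ?thesis
    by simp
qed

lemma (in prob_space) AE_eventually_small_increments:
  fixes G :: "real \<Rightarrow> 'a \<Rightarrow> real" and A r q d \<rho> :: real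
  defines "\<beta> \<equiv> 2 powr (1 - r) / \<rho> powr q"
  assumes meas: "\<And>t. 0 \<le> t \<Longrightarrow> G t \<in> borel_measurable M"
    and tail: "\<And>s t a. 0 \<le> s \<Longrightarrow> 0 \<le> t \<Longrightarrow> 0 < a \<Longrightarrow>
      prob {x\<in>space M. a \<le> \<bar>G t x - G s x\<bar>} \<le> A * \<bar>t - s\<bar> powr r / a powr q"
    and "0 \<le> A" "0 < \<rho>" "\<rho> < 1" "\<beta> < 1" "0 \<le> r" "0 < q" "(r + 1) / q < d"
  shows "AE x in M. \<forall>\<^sub>F n in sequentially.
    \<bar>G (real n) x - G 0 x\<bar> < (real n + 1) powr d \<and>
    x \<notin> large_dyadic_increments M G (real n) (\<lambda>l. (real n + 1) powr d * (1 - \<rho>) * \<rho>^l)"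
proof -
  define b where "b n = (real n + 1) powr d" for n :: nat
  define D where "D n = large_dyadic_increments M G (real n) (\<lambda>l. b n * (1 - \<rho>) * \<rho>^l)" for n
  define S where "S n = {x\<in>space M. b n \<le> \<bar>G (real n) x - G 0 x\<bar>}" for n
  define B where "B n = S n \<union> D n" for n
  define C where "C = A + A / ((1 - \<rho>) powr q * (1 - \<beta>))"
  have b_pos: "0 < b n" for n
    unfolding b_def by simp
  have D: "D n \<in> events" "prob (D n) \<le> A / ((b n * (1 - \<rho>)) powr q * (1 - \<beta>))" for n
    using large_dyadic_increments_bound[where s="real n" and b="b n", OF meas tail \<open>0 \<le> A\<close> _ b_pos
        \<open>0 < \<rho>\<close> \<open>\<rho> < 1\<close> \<open>\<beta> < 1\<close>[unfolded \<beta>_def]]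
    unfolding D_def \<beta>_def by simp_all
  have S_sets: "S n \<in> events" for n
  proof -
    have [measurable]: "G (real n) \<in> borel_measurable M" "G 0 \<in> borel_measurable M"
      using meas by simp_all
    show ?thesis
      unfolding S_def by measurable
  qed
  then have B_sets: "B n \<in> events" for n
    unfolding B_def using D(1) by auto
  have B_bound: "prob (B n) \<le> C * (real n + 1) powr (r - d * q)" for n
  proof -
    have b_powr: "b n powr q = (real n + 1) powr (d * q)"
      unfolding b_def by (simp add: powr_powr)
    have "prob (B n) \<le> prob (S n) + prob (D n)"
      unfolding B_def using S_sets D(1) by (intro measure_Un_le)
    also have "prob (S n) \<le> A * real n powr r / b n powr q"
      unfolding S_def using tail[of 0 "real n" "b n"] b_pos by simp
    also have "\<dots> \<le> A * ((real n + 1) powr r / (real n + 1) powr (d * q))"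
      unfolding b_powr times_divide_eq_right[symmetric] using \<open>0 \<le> A\<close> \<open>0 \<le> r\<close>
      by (intro mult_left_mono divide_right_mono powr_mono2) auto
    also have "prob (D n) \<le> A / ((1 - \<rho>) powr q * (1 - \<beta>)) / (real n + 1) powr (d * q)"
    proof -
      have "(b n * (1 - \<rho>)) powr q = (1 - \<rho>) powr q * (real n + 1) powr (d * q)"
        using \<open>\<rho> < 1\<close> b_pos[of n] by (simp add: powr_mult b_powr mult.commute)
      then show ?thesis
        using D(2)[of n] by (simp add: mult_ac)
    qed
    also have "\<dots> \<le> A / ((1 - \<rho>) powr q * (1 - \<beta>)) * ((real n + 1) powr r / (real n + 1) powr (d * q))"
    proof -
      have one_le: "1 / (real n + 1) powr (d * q) \<le> (real n + 1) powr r / (real n + 1) powr (d * q)"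
        using \<open>0 \<le> r\<close> by (intro divide_right_mono ge_one_powr_ge_zero) auto
      show ?thesis
        using mult_left_mono[OF one_le, of "A / ((1 - \<rho>) powr q * (1 - \<beta>))"] \<open>0 \<le> A\<close> \<open>\<beta> < 1\<close>
        by simp
    qed
    finally show ?thesis
      unfolding C_def by (simp add: powr_diff algebra_simps)
  qed
  have "r - d * q < -1"
    using \<open>(r + 1) / q < d\<close> \<open>0 < q\<close> by (simp add: field_simps)
  then have "summable (\<lambda>n. (real n + 1) powr (r - d * q))"
    by (rule summable_real_Suc_powr)
  then have "summable (\<lambda>n. C * (real n + 1) powr (r - d * q))"
    by (rule summable_mult)
  then have "summable (\<lambda>n. prob (B n))"
    by (rule summable_comparison_test') (use B_bound in simp)
  then have "AE x in M. \<forall>\<^sub>F n in sequentially. x \<in> space M - B n"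
    using B_sets by (intro borel_cantelli_AE1) (auto simp: emeasure_eq_measure)
  then show ?thesis
    by (elim eventually_mono) (auto simp: B_def S_def D_def b_def not_le)
qed

lemma (in prob_space) growth_bound_of_increment_tail:
  fixes G :: "real \<Rightarrow> 'a \<Rightarrow> real" and A r q d :: real
  assumes meas: "\<And>t. 0 \<le> t \<Longrightarrow> G t \<in> borel_measurable M"
    and cont: "\<forall>x\<in>space M. continuous_on {0..} (\<lambda>t. G t x)"
    and tail: "\<And>s t a. 0 \<le> s \<Longrightarrow> 0 \<le> t \<Longrightarrow> 0 < a \<Longrightarrow>
      prob {x\<in>space M. a \<le> \<bar>G t x - G s x\<bar>} \<le> A * \<bar>t - s\<bar> powr r / a powr q"
    and G0: "AE x in M. G 0 x = 0"
    and "0 \<le> A" "1 < r" "0 < q" "(r + 1) / q < d"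
  shows "AE x in M. \<exists>N. \<forall>t\<ge>N. \<bar>G t x\<bar> \<le> 2 * (t + 1) powr d"
proof -
  have "0 < (r + 1) / q"
    using \<open>1 < r\<close> \<open>0 < q\<close> by simp
  then have "0 < d"
    using \<open>(r + 1) / q < d\<close> by linarith
  (* This ratio makes the level-l bounds 2^l * 2^(-l r) / rho^(l q) of large_dyadic_increments_bound
     decay geometrically, with ratio 2 powr ((1 - r) / 2). *)
  define \<rho> where "\<rho> = 2 powr ((1 - r) / (2 * q))"
  have "0 < \<rho>" "\<rho> < 1"
    unfolding \<rho>_def using \<open>1 < r\<close> \<open>0 < q\<close> by (auto intro!: powr_less_one simp: divide_neg_pos)
  have exponent: "(1 - r) / (2 * q) * q = (1 - r) / 2"
    using \<open>0 < q\<close> by simp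
  have "2 powr (1 - r) / \<rho> powr q = 2 powr ((1 - r) - (1 - r) / 2)"
    unfolding \<rho>_def powr_powr exponent powr_diff ..
  also have "\<dots> = 2 powr ((1 - r) / 2)"
    by (rule arg_cong[where f="(powr) 2"]) (simp add: field_simps)
  also have "\<dots> < 1"
    using \<open>1 < r\<close> by (intro powr_less_one) auto
  finally have \<beta>: "2 powr (1 - r) / \<rho> powr q < 1" .
  have small: "AE x in M. \<forall>\<^sub>F n in sequentially.
      \<bar>G (real n) x - G 0 x\<bar> < (real n + 1) powr d \<and>
      x \<notin> large_dyadic_increments M G (real n) (\<lambda>l. (real n + 1) powr d * (1 - \<rho>) * \<rho>^l)"
    using AE_eventually_small_increments[OF meas tail \<open>0 \<le> A\<close> \<open>0 < \<rho>\<close> \<open>\<rho> < 1\<close> \<beta> _ \<open>0 < q\<close>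
      \<open>(r + 1) / q < d\<close>] \<open>1 < r\<close> by simp
  show ?thesis
    using small G0 AE_space
  proof eventually_elim
    case (elim x)
    then obtain N where N: "\<And>n. N \<le> n \<Longrightarrow> \<bar>G (real n) x - G 0 x\<bar> < (real n + 1) powr d \<and>
      x \<notin> large_dyadic_increments M G (real n) (\<lambda>l. (real n + 1) powr d * (1 - \<rho>) * \<rho>^l)"
      by (auto simp: eventually_sequentially)
    have "\<bar>G t x\<bar> \<le> 2 * (t + 1) powr d" if "real N \<le> t" for t
    proof -
      define n where "n = nat \<lfloor>t\<rfloor>"
      have "N \<le> n" "t \<in> {real n..real n + 1}"
        using that unfolding n_def by (auto simp: le_nat_floor)
      let ?b = "(real n + 1) powr d"
      have steps: "\<bar>G (real n + real (i+1) / 2^l) x - G (real n + real i / 2^l) x\<bar> \<le> ?b * (1 - \<rho>) * \<rho>^l"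
        if "i < 2^l" for l i
      proof -
        have "x \<notin> {y\<in>space M. ?b * (1 - \<rho>) * \<rho>^l \<le>
            \<bar>G (real n + real (i+1) / 2^l) y - G (real n + real i / 2^l) y\<bar>}"
          using N[OF \<open>N \<le> n\<close>] that unfolding large_dyadic_increments_def by blast
        then show ?thesis
          using elim by auto
      qed
      have "\<bar>G t x\<bar> \<le> 2 * ?b"
        by (rule abs_le_of_dyadic_increments[OF _ _ \<open>0 < \<rho>\<close> \<open>\<rho> < 1\<close> steps \<open>t \<in> {real n..real n + 1}\<close>])
          (use cont elim N[OF \<open>N \<le> n\<close>] in \<open>auto intro: continuous_on_subset\<close>)
      also have "?b \<le> (t + 1) powr d"
        using \<open>t \<in> {real n..real n + 1}\<close> \<open>0 < d\<close> by (intro powr_mono2) auto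
      finally show ?thesis
        by simp
    qed
    then show ?case
      by blast
  qed
qed

lemma (in prob_space) gaussian_process_growth_bound:
  fixes G :: "real \<Rightarrow> 'a \<Rightarrow> real"
  assumes gp: "gaussian_process M G"
    and incr: "\<forall>s\<ge>0. \<forall>t\<ge>0. expectation (\<lambda>x. (G t x - G s x)\<^sup>2) \<le> c * \<bar>t - s\<bar> powr (2 * \<gamma>)"
    and cont: "\<forall>x\<in>space M. continuous_on {0..} (\<lambda>t. G t x)"
    and G0: "AE x in M. G 0 x = 0"
    and "0 \<le> c" "0 < \<gamma>" "\<gamma> < d"
  shows "AE x in M. \<exists>N. \<forall>t\<ge>N. \<bar>G t x\<bar> \<le> 2 * (t + 1) powr d"
proof -
  (* Moments of order q = 2k give r = 2 gamma k > 1 and (r + 1) / q = gamma + 1 / (2k) < d. *)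
  obtain k :: nat where k: "1 / (2 * \<gamma>) + 1 / (2 * (d - \<gamma>)) < k"
    using reals_Archimedean2 by blast
  have "0 < 1 / (2 * \<gamma>)" "0 < 1 / (2 * (d - \<gamma>))"
    using \<open>0 < \<gamma>\<close> \<open>\<gamma> < d\<close> by simp_all
  then have "1 / (2 * \<gamma>) < k" "1 / (2 * (d - \<gamma>)) < k"
    using k by linarith+
  then have "0 < k"
    using \<open>0 < 1 / (2 * \<gamma>)\<close> by linarith
  have "1 < 2 * \<gamma> * k" "1 / (2 * k) < d - \<gamma>"
    using \<open>1 / (2 * \<gamma>) < k\<close> \<open>1 / (2 * (d - \<gamma>)) < k\<close> \<open>0 < k\<close> \<open>0 < \<gamma>\<close> \<open>\<gamma> < d\<close>
    by (auto simp: divide_less_eq mult.commute mult.left_commute)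
  then have "(2 * \<gamma> * k + 1) / (2 * k) < d"
    using \<open>0 < k\<close> by (simp add: add_divide_distrib)
  have meas: "\<And>t. 0 \<le> t \<Longrightarrow> G t \<in> borel_measurable M"
    using gp unfolding gaussian_process_def by blast
  have tail: "prob {x\<in>space M. a \<le> \<bar>G t x - G s x\<bar>}
      \<le> (2 * 4^k * fact (2*k) * c^k) * \<bar>t - s\<bar> powr (2 * \<gamma> * k) / a powr (2 * k)"
    if "0 \<le> s" "0 \<le> t" "0 < a" for s t a
    using gaussian_process_increment_tail[OF gp incr that \<open>0 < k\<close>] by simp
  show ?thesis
    by (rule growth_bound_of_increment_tail[OF meas cont tail G0])
      (use \<open>0 \<le> c\<close> \<open>0 < k\<close> \<open>1 < 2 * \<gamma> * k\<close> \<open>(2 * \<gamma> * k + 1) / (2 * k) < d\<close> in auto)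
qed

lemma locally_holder_nonneg_continuous_on:
  assumes "locally_holder_nonneg \<alpha> f" and "0 < \<alpha>"
  shows "continuous_on {0..} f"
  unfolding continuous_on_iff
proof (intro ballI allI impI)
  fix x e :: real assume "x \<in> {0..}" "0 < e"
  then obtain C where C: "\<forall>s\<in>{0..x+1}. \<forall>t\<in>{0..x+1}. \<bar>f t - f s\<bar> \<le> C * \<bar>t - s\<bar> powr \<alpha>"
    using assms(1) unfolding locally_holder_nonneg_def by (meson atLeast_iff add_nonneg_nonneg zero_le_one)
  define \<epsilon> where "\<epsilon> = e / (\<bar>C\<bar> + 1)"
  have "0 < \<epsilon>"
    unfolding \<epsilon>_def using \<open>0 < e\<close> by simp
  show "\<exists>d>0. \<forall>y\<in>{0..}. dist y x < d \<longrightarrow> dist (f y) (f x) < e"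
  proof (intro exI[of _ "min 1 (\<epsilon> powr (1/\<alpha>))"] conjI ballI impI)
    fix y assume "y \<in> {0..}" and close: "dist y x < min 1 (\<epsilon> powr (1/\<alpha>))"
    have "\<bar>y - x\<bar> powr \<alpha> < (\<epsilon> powr (1/\<alpha>)) powr \<alpha>"
      using close \<open>0 < \<alpha>\<close> by (intro powr_less_mono2) (auto simp: dist_real_def)
    also have "\<dots> = \<epsilon>"
      using \<open>0 < \<epsilon>\<close> \<open>0 < \<alpha>\<close> by (simp add: powr_powr)
    finally have "\<bar>C\<bar> * \<bar>y - x\<bar> powr \<alpha> \<le> \<bar>C\<bar> * \<epsilon>"
      by (intro mult_left_mono) auto
    also have "\<bar>C\<bar> * \<epsilon> < e"
      unfolding \<epsilon>_def using \<open>0 < e\<close> by (simp add: field_simps)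
    moreover have "\<bar>f y - f x\<bar> \<le> \<bar>C\<bar> * \<bar>y - x\<bar> powr \<alpha>"
    proof -
      have "y \<in> {0..x+1}"
        using close \<open>y \<in> {0..}\<close> by (auto simp: dist_real_def)
      then have "\<bar>f y - f x\<bar> \<le> C * \<bar>y - x\<bar> powr \<alpha>"
        using C \<open>x \<in> {0..}\<close> by simp
      also have "\<dots> \<le> \<bar>C\<bar> * \<bar>y - x\<bar> powr \<alpha>"
        by (intro mult_right_mono) auto
      finally show ?thesis .
    qed
    ultimately show "dist (f y) (f x) < e"
      by (simp add: dist_real_def)
  qed (use \<open>0 < \<epsilon>\<close> in simp)
qed

lemma tendsto_zero_of_powr_bound:
  fixes g :: "real \<Rightarrow> real"
  assumes "\<forall>t\<ge>N. \<bar>g t\<bar> \<le> H * (t + 1) powr d" and "d < \<delta>"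
  shows "((\<lambda>T. g T / T powr \<delta>) \<longlongrightarrow> 0) at_top"
proof (rule Lim_null_comparison)
  show "\<forall>\<^sub>F T in at_top. norm (g T / T powr \<delta>) \<le> H * ((T + 1) powr d / T powr \<delta>)"
    using eventually_ge_at_top[of "max N 1"]
  proof eventually_elim
    case (elim T)
    then have "\<bar>g T\<bar> / T powr \<delta> \<le> H * (T + 1) powr d / T powr \<delta>"
      using assms(1) by (intro divide_right_mono) auto
    then show ?case
      by simp
  qed
  show "((\<lambda>T. H * ((T + 1) powr d / T powr \<delta>)) \<longlongrightarrow> 0) at_top"
    using \<open>d < \<delta>\<close> by (intro tendsto_mult_right_zero) real_asymp
qed

section \<open>The integrated equation\<close>

lemma powr_bound_of_eventually_powr_bound:
  fixes g :: "real \<Rightarrow> real"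
  assumes "continuous_on {0..} g" and "\<forall>t\<ge>N. \<bar>g t\<bar> \<le> H * (t + 1) powr d" and "0 \<le> d"
  shows "\<exists>H'. \<forall>t\<ge>0. \<bar>g t\<bar> \<le> H' * (t + 1) powr d"
proof -
  have "bounded (g ` {0..max N 0})"
    using assms(1) by (intro compact_imp_bounded compact_continuous_image) (auto intro: continuous_on_subset)
  then obtain B where B: "\<And>t. t \<in> {0..max N 0} \<Longrightarrow> \<bar>g t\<bar> \<le> B"
    unfolding bounded_real by blast
  then have "0 \<le> B"
    by (meson abs_ge_zero atLeastAtMost_iff max.cobounded2 order.refl order_trans)
  have "\<bar>g t\<bar> \<le> max B H * (t + 1) powr d" if "0 \<le> t" for t
  proof (cases "t \<le> max N 0")
    case True
    have "1 \<le> (t + 1) powr d"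
      using that \<open>0 \<le> d\<close> by (intro ge_one_powr_ge_zero) auto
    then have "max B H * 1 \<le> max B H * (t + 1) powr d"
      using \<open>0 \<le> B\<close> by (intro mult_left_mono) auto
    moreover have "\<bar>g t\<bar> \<le> B"
      using B True that by simp
    ultimately show ?thesis
      by linarith
  next
    case False
    then have "\<bar>g t\<bar> \<le> H * (t + 1) powr d"
      using assms(2) by auto
    also have "\<dots> \<le> max B H * (t + 1) powr d"
      by (intro mult_right_mono) auto
    finally show ?thesis .
  qed
  then show ?thesis
    by blast
qed

lemma abs_diff_le_of_abs_deriv_le:
  fixes f g f' g' :: "real \<Rightarrow> real"
  assumes "a \<le> b" "continuous_on {a..b} f" "continuous_on {a..b} g"
    and f': "\<And>x. a < x \<Longrightarrow> x < b \<Longrightarrow> (f has_real_derivative f' x) (at x)"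
    and g': "\<And>x. a < x \<Longrightarrow> x < b \<Longrightarrow> (g has_real_derivative g' x) (at x)"
    and le: "\<And>x. a < x \<Longrightarrow> x < b \<Longrightarrow> \<bar>f' x\<bar> \<le> g' x"
  shows "\<bar>f b - f a\<bar> \<le> g b - g a"
proof -
  have "g a - f a \<le> g b - f b"
  proof (rule DERIV_nonneg_imp_increasing_open[OF \<open>a \<le> b\<close>])
    fix x assume "a < x" "x < b"
    then show "\<exists>y. ((\<lambda>x. g x - f x) has_real_derivative y) (at x) \<and> 0 \<le> y"
      using f' g' le[of x] by (intro exI[of _ "g' x - f' x"] conjI DERIV_diff) (auto simp: abs_le_iff)
  qed (intro continuous_intros assms)
  moreover have "g a + f a \<le> g b + f b"
  proof (rule DERIV_nonneg_imp_increasing_open[OF \<open>a \<le> b\<close>])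
    fix x assume "a < x" "x < b"
    then show "\<exists>y. ((\<lambda>x. g x + f x) has_real_derivative y) (at x) \<and> 0 \<le> y"
      using f' g' le[of x] by (intro exI[of _ "g' x + f' x"] conjI DERIV_add) (auto simp: abs_le_iff)
  qed (intro continuous_intros assms)
  ultimately show ?thesis
    by linarith
qed

lemma linear_ode_integral_bound:
  fixes X F :: "real \<Rightarrow> real"
  assumes "0 < \<theta>" and cont: "continuous_on {0..} X"
    and ode: "\<And>t. 0 \<le> t \<Longrightarrow> X t = \<theta> * integral {0..t} X + F t"
    and forcing: "\<And>t. 0 \<le> t \<Longrightarrow> \<bar>F t\<bar> \<le> L * (t + 1)"
    and "0 \<le> T"
  shows "\<bar>integral {0..T} X\<bar> \<le> L * (1/\<theta> + 1/\<theta>\<^sup>2) * exp (\<theta> * T)"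
proof -
  define W where "W u = exp (- \<theta> * u) * integral {0..u} X" for u
  define \<Phi> where "\<Phi> u = - L * exp (- \<theta> * u) * ((u + 1) / \<theta> + 1 / \<theta>\<^sup>2)" for u
  have "0 \<le> L"
    using forcing[of 0] by auto
  have cont_T: "continuous_on {0..T} X"
    using cont by (rule continuous_on_subset) auto
  have W': "(W has_real_derivative exp (- \<theta> * u) * F u) (at u)" if "0 < u" "u < T" for u
  proof -
    have "((\<lambda>u. integral {0..u} X) has_real_derivative X u) (at u)"
      using integral_has_real_derivative[OF cont_T, of u] that by (simp add: at_within_Icc_at)
    then have "(W has_real_derivative exp (- \<theta> * u) * (X u - \<theta> * integral {0..u} X)) (at u)"
      unfolding W_def by (auto intro!: derivative_eq_intros simp: algebra_simps)
    then show ?thesis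
      using ode[of u] that by simp
  qed
  have \<Phi>': "(\<Phi> has_real_derivative L * ((u + 1) * exp (- \<theta> * u))) (at u)" for u
    unfolding \<Phi>_def using \<open>0 < \<theta>\<close>
    by (auto intro!: derivative_eq_intros simp: field_simps power2_eq_square)
  (* W' = exp(-theta u) F u is dominated by Phi'; moreover Phi <= 0. *)
  have "\<bar>W T - W 0\<bar> \<le> \<Phi> T - \<Phi> 0"
  proof (rule abs_diff_le_of_abs_deriv_le[OF \<open>0 \<le> T\<close> _ _ W' \<Phi>'])
    show "continuous_on {0..T} W"
      unfolding W_def
      by (intro continuous_intros indefinite_integral_continuous_1 integrable_continuous_interval cont_T)
    show "continuous_on {0..T} \<Phi>"
      unfolding \<Phi>_def using \<open>0 < \<theta>\<close> by (intro continuous_intros) auto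
    show "\<bar>exp (- \<theta> * u) * F u\<bar> \<le> L * ((u + 1) * exp (- \<theta> * u))" if "0 < u" for u
      using forcing[of u] that by (simp add: abs_mult mult_ac)
  qed
  also have "\<dots> \<le> L * (1/\<theta> + 1/\<theta>\<^sup>2)"
    unfolding \<Phi>_def using \<open>0 \<le> L\<close> \<open>0 < \<theta>\<close> \<open>0 \<le> T\<close> by simp
  finally have "exp (- \<theta> * T) * \<bar>integral {0..T} X\<bar> \<le> L * (1/\<theta> + 1/\<theta>\<^sup>2)"
    unfolding W_def by (simp add: abs_mult)
  then show ?thesis
    by (simp add: exp_minus field_simps)
qed

lemma linear_ode_solution_exp_bound:
  fixes X F :: "real \<Rightarrow> real"
  assumes "0 < \<theta>" and cont: "continuous_on {0..} X"
    and ode: "\<And>t. 0 \<le> t \<Longrightarrow> X t = \<theta> * integral {0..t} X + F t"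
    and forcing: "\<And>t. 0 \<le> t \<Longrightarrow> \<bar>F t\<bar> \<le> L * (t + 1)"
  shows "\<exists>R. \<forall>t\<ge>0. \<bar>X t\<bar> \<le> R * exp (\<theta> * t)"
proof -
  define Q where "Q = L * (1/\<theta> + 1/\<theta>\<^sup>2)"
  have "0 \<le> L"
    using forcing[of 0] by auto
  have "\<bar>X t\<bar> \<le> (\<theta> * Q + L * (1 + 1/\<theta>)) * exp (\<theta> * t)" if "0 \<le> t" for t
  proof -
    have "t + 1 \<le> (1 + 1/\<theta>) * exp (\<theta> * t)"
    proof -
      have "\<theta> * t \<le> exp (\<theta> * t)"
        using exp_ge_add_one_self[of "\<theta> * t"] by linarith
      then have "t \<le> exp (\<theta> * t) / \<theta>"
        using \<open>0 < \<theta>\<close> by (simp add: pos_le_divide_eq mult.commute)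
      moreover have "1 \<le> exp (\<theta> * t)"
        using \<open>0 < \<theta>\<close> \<open>0 \<le> t\<close> by simp
      moreover have "(1 + 1/\<theta>) * exp (\<theta> * t) = exp (\<theta> * t) + exp (\<theta> * t) / \<theta>"
        by (simp add: distrib_right)
      ultimately show ?thesis
        by linarith
    qed
    have "\<bar>X t\<bar> \<le> \<theta> * \<bar>integral {0..t} X\<bar> + \<bar>F t\<bar>"
      using ode[OF \<open>0 \<le> t\<close>] abs_triangle_ineq[of "\<theta> * integral {0..t} X" "F t"] \<open>0 < \<theta>\<close>
      by (simp add: abs_mult)
    also have "\<dots> \<le> \<theta> * (Q * exp (\<theta> * t)) + L * ((1 + 1/\<theta>) * exp (\<theta> * t))"
    proof (rule add_mono)
      show "\<theta> * \<bar>integral {0..t} X\<bar> \<le> \<theta> * (Q * exp (\<theta> * t))"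
        using linear_ode_integral_bound[OF assms \<open>0 \<le> t\<close>] \<open>0 < \<theta>\<close> unfolding Q_def by simp
      show "\<bar>F t\<bar> \<le> L * ((1 + 1/\<theta>) * exp (\<theta> * t))"
        using forcing[OF \<open>0 \<le> t\<close>] mult_left_mono[OF \<open>t + 1 \<le> _\<close> \<open>0 \<le> L\<close>] by linarith
    qed
    also have "\<dots> = (\<theta> * Q + L * (1 + 1/\<theta>)) * exp (\<theta> * t)"
      by (simp add: algebra_simps)
    finally show ?thesis .
  qed
  then show ?thesis
    by blast
qed

lemma exp_weighted_integral_tendsto_zero:
  fixes g X :: "real \<Rightarrow> real"
  assumes "0 < \<theta>" and "0 \<le> d" and "d < 1"
    and "continuous_on {0..} g" and "continuous_on {0..} X"
    and g: "\<And>t. 0 \<le> t \<Longrightarrow> \<bar>g t\<bar> \<le> H * (t + 1) powr d"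
    and X: "\<And>t. 0 \<le> t \<Longrightarrow> \<bar>X t\<bar> \<le> R * exp (\<theta> * t)"
  shows "((\<lambda>T. exp (- \<theta> * T) / T * integral {0..T} (\<lambda>t. \<bar>g t * X t\<bar>)) \<longlongrightarrow> 0) at_top"
proof (rule Lim_null_comparison)
  have "0 \<le> H" "0 \<le> R"
    using g[of 0] X[of 0] by (auto intro: order_trans[OF abs_ge_zero])
  show "\<forall>\<^sub>F T in at_top. norm (exp (- \<theta> * T) / T * integral {0..T} (\<lambda>t. \<bar>g t * X t\<bar>))
      \<le> H * R / \<theta> * ((T + 1) powr d / T)"
    using eventually_gt_at_top[of 0]
  proof eventually_elim
    case (elim T)
    let ?D = "H * (T + 1) powr d * R"
    have "((\<lambda>t. exp (\<theta> * t)) has_integral exp (\<theta> * T) / \<theta> - exp (\<theta> * 0) / \<theta>) {0..T}"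
      using elim \<open>0 < \<theta>\<close> by (intro fundamental_theorem_of_calculus)
        (auto intro!: derivative_eq_intros simp flip: has_real_derivative_iff_has_vector_derivative)
    then have exp_integral:
        "((\<lambda>t. ?D * exp (\<theta> * t)) has_integral ?D * (exp (\<theta> * T) / \<theta> - 1 / \<theta>)) {0..T}"
      by (intro has_integral_mult_right) simp
    have integrable: "(\<lambda>t. \<bar>g t * X t\<bar>) integrable_on {0..T}"
      using assms(4,5) by (intro integrable_continuous_interval continuous_intros) (auto intro: continuous_on_subset)
    have "integral {0..T} (\<lambda>t. \<bar>g t * X t\<bar>) \<le> integral {0..T} (\<lambda>t. ?D * exp (\<theta> * t))"
    proof (rule integral_le[OF integrable has_integral_integrable[OF exp_integral]])
      fix t assume t: "t \<in> {0..T}"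
      have "(t + 1) powr d \<le> (T + 1) powr d"
        using t \<open>0 \<le> d\<close> by (intro powr_mono2) auto
      then have "\<bar>g t\<bar> \<le> H * (T + 1) powr d"
        using g[of t] t \<open>0 \<le> H\<close> by (auto intro: order_trans mult_left_mono)
      then have "\<bar>g t\<bar> * \<bar>X t\<bar> \<le> H * (T + 1) powr d * (R * exp (\<theta> * t))"
        using X[of t] t by (intro mult_mono) auto
      then show "\<bar>g t * X t\<bar> \<le> ?D * exp (\<theta> * t)"
        by (simp add: abs_mult mult_ac)
    qed
    also have "\<dots> = ?D * (exp (\<theta> * T) / \<theta> - 1 / \<theta>)"
      by (rule integral_unique[OF exp_integral])
    also have "\<dots> \<le> ?D * (exp (\<theta> * T) / \<theta>)"
      using \<open>0 \<le> H\<close> \<open>0 \<le> R\<close> \<open>0 < \<theta>\<close> by (intro mult_left_mono) auto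
    finally have "integral {0..T} (\<lambda>t. \<bar>g t * X t\<bar>) \<le> ?D * (exp (\<theta> * T) / \<theta>)" .
    moreover have "0 \<le> integral {0..T} (\<lambda>t. \<bar>g t * X t\<bar>)"
      using integrable by (intro integral_nonneg) auto
    ultimately show ?case
      using elim \<open>0 < \<theta>\<close> by (simp add: exp_minus field_simps)
  qed
  show "((\<lambda>T. H * R / \<theta> * ((T + 1) powr d / T)) \<longlongrightarrow> 0) at_top"
    using \<open>d < 1\<close> by (intro tendsto_mult_right_zero) real_asymp
qed

lemma ode_exp_weighted_integral_tendsto_zero:
  fixes g X :: "real \<Rightarrow> real"
  assumes "0 < \<theta>" "0 \<le> d" "d < 1"
    and cont_g: "continuous_on {0..} g" and cont_X: "continuous_on {0..} X"
    and ode: "\<And>t. 0 \<le> t \<Longrightarrow> X t = \<mu> * \<theta> * t + \<theta> * integral {0..t} X + g t"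
    and growth: "\<forall>t\<ge>N. \<bar>g t\<bar> \<le> H * (t + 1) powr d"
  shows "((\<lambda>T. exp (- \<theta> * T) / T * integral {0..T} (\<lambda>t. \<bar>g t * X t\<bar>)) \<longlongrightarrow> 0) at_top"
proof -
  obtain H' where H': "\<forall>t\<ge>0. \<bar>g t\<bar> \<le> H' * (t + 1) powr d"
    using powr_bound_of_eventually_powr_bound[OF cont_g growth \<open>0 \<le> d\<close>] by blast
  have "0 \<le> H'"
    using H'[rule_format, of 0] abs_ge_zero[of "g 0"] by simp
  have forcing: "\<bar>\<mu> * \<theta> * t + g t\<bar> \<le> (\<bar>\<mu>\<bar> * \<theta> + H') * (t + 1)" if "0 \<le> t" for t
  proof -
    have "(t + 1) powr d \<le> (t + 1) powr 1"
      using that \<open>d < 1\<close> by (intro powr_mono) auto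
    then have "H' * (t + 1) powr d \<le> H' * (t + 1)"
      using \<open>0 \<le> H'\<close> that by (simp add: mult_left_mono)
    then have "\<bar>g t\<bar> \<le> H' * (t + 1)"
      using H'[rule_format, OF that] by linarith
    moreover have "\<bar>\<mu> * \<theta> * t\<bar> \<le> \<bar>\<mu>\<bar> * \<theta> * (t + 1)"
      using that \<open>0 < \<theta>\<close> by (simp add: abs_mult mult_left_mono)
    ultimately have "\<bar>\<mu> * \<theta> * t + g t\<bar> \<le> \<bar>\<mu>\<bar> * \<theta> * (t + 1) + H' * (t + 1)"
      using abs_triangle_ineq[of "\<mu> * \<theta> * t" "g t"] by linarith
    then show ?thesis
      by (simp add: distrib_right)
  qed
  have ode': "X t = \<theta> * integral {0..t} X + (\<mu> * \<theta> * t + g t)" if "0 \<le> t" for t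
    using ode[OF that] by linarith
  obtain R where R: "\<forall>t\<ge>0. \<bar>X t\<bar> \<le> R * exp (\<theta> * t)"
    using linear_ode_solution_exp_bound[OF \<open>0 < \<theta>\<close> cont_X ode' forcing] by blast
  show ?thesis
    by (rule exp_weighted_integral_tendsto_zero[OF \<open>0 < \<theta>\<close> \<open>0 \<le> d\<close> \<open>d < 1\<close> cont_g cont_X])
      (use H' R in auto)
qed

theorem mainTheorem1:
  fixes M :: "'a measure" and G X :: "real \<Rightarrow> 'a \<Rightarrow> real"
    and c \<gamma> \<theta> \<mu> \<delta> :: real
  assumes "prob_space M"
    and "gaussian_process M G"
    and centered: "\<forall>t\<ge>0. prob_space.expectation M (G t) = 0"
    and G0: "AE x in M. G 0 x = 0"
    and "c > 0" and "0 < \<gamma>" and "\<gamma> < 1"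
    and incr: "\<forall>s\<ge>0. \<forall>t\<ge>0. prob_space.expectation M (\<lambda>x. (G t x - G s x)\<^sup>2) \<le> c * \<bar>t - s\<bar> powr (2 * \<gamma>)"
    and holder: "\<forall>x\<in>space M. \<forall>\<epsilon>. 0 < \<epsilon> \<and> \<epsilon> < \<gamma> \<longrightarrow> locally_holder_nonneg (\<gamma> - \<epsilon>) (\<lambda>t. G t x)"
    and "\<theta> > 0"
    and Xcont: "\<forall>x\<in>space M. continuous_on {0..} (\<lambda>t. X t x)"
    and Xeq: "\<forall>x\<in>space M. \<forall>t\<ge>0.
               X t x = \<mu> * \<theta> * t + \<theta> * integral {0..t} (\<lambda>s. X s x) + G t x"
    and "\<gamma> < \<delta>" and "\<delta> \<le> 1"
  shows "AE x in M.
           ((\<lambda>T. G T x / T powr \<delta>) \<longlongrightarrow> 0) at_top \<and>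
           ((\<lambda>T. exp (- \<theta> * T) / T * integral {0..T} (\<lambda>t. \<bar>G t x * X t x\<bar>)) \<longlongrightarrow> 0) at_top"
proof -
  interpret prob_space M by fact
  have Gcont: "\<forall>x\<in>space M. continuous_on {0..} (\<lambda>t. G t x)"
  proof
    fix x assume "x \<in> space M"
    then have "locally_holder_nonneg (\<gamma> - \<gamma> / 2) (\<lambda>t. G t x)"
      using holder[rule_format, OF \<open>x \<in> space M\<close>, of "\<gamma> / 2"] \<open>0 < \<gamma>\<close> by simp
    then show "continuous_on {0..} (\<lambda>t. G t x)"
      by (rule locally_holder_nonneg_continuous_on) (use \<open>0 < \<gamma>\<close> in simp)
  qed
  define d where "d = (\<gamma> + \<delta>) / 2"
  have "\<gamma> < d" "d < \<delta>" "0 \<le> d" "d < 1"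
    unfolding d_def using \<open>0 < \<gamma>\<close> \<open>\<gamma> < \<delta>\<close> \<open>\<delta> \<le> 1\<close> by auto
  have "AE x in M. \<exists>N. \<forall>t\<ge>N. \<bar>G t x\<bar> \<le> 2 * (t + 1) powr d"
    using gaussian_process_growth_bound[OF \<open>gaussian_process M G\<close> incr Gcont G0 _ \<open>0 < \<gamma>\<close> \<open>\<gamma> < d\<close>] \<open>c > 0\<close>
    by simp
  then show ?thesis
    using AE_space
  proof eventually_elim
    case (elim x)
    then obtain N where N: "\<forall>t\<ge>N. \<bar>G t x\<bar> \<le> 2 * (t + 1) powr d"
      by blast
    have "x \<in> space M"
      using elim by blast
    have "((\<lambda>T. exp (- \<theta> * T) / T * integral {0..T} (\<lambda>t. \<bar>G t x * X t x\<bar>)) \<longlongrightarrow> 0) at_top"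
      by (rule ode_exp_weighted_integral_tendsto_zero[OF \<open>\<theta> > 0\<close> \<open>0 \<le> d\<close> \<open>d < 1\<close>
            Gcont[rule_format, OF \<open>x \<in> space M\<close>] Xcont[rule_format, OF \<open>x \<in> space M\<close>] _ N])
        (use Xeq \<open>x \<in> space M\<close> in blast)
    then show ?case
      using tendsto_zero_of_powr_bound[OF N \<open>d < \<delta>\<close>] by blast
  qed
qed

end
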